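(* When the segment-based (GK) algorithm described in the context is run, after the deletion step at any time step $t$, the number of type-2 elements stored in QS is $O(\ell\log t)$.
   Context: A stream of elements from a totally ordered universe arrives one by one. Let $\ell=1/\varepsilon$ be an integer. The stream is partitioned into consecutive chunks of $\ell$ elements; time step $t$ is the arrival of the $t$-th chunk, and $t_0(x)$ is the time step in which $x$ arrives. The summary QS stores elements $e_1<\dots<e_s$ seen so far, each with integers $\mathrm{rmin}(e),\mathrm{rmax}(e)$; by convention $\mathrm{rmin}(e_0)=0$. An element $+\infty$, larger than all others, is inserted at the start of the stream and is always stored as $e_s$. Insert$(x)$: let $e_i$ be the smallest stored element with $e_i>x$; set $\mathrm{rmin}(x)=\mathrm{rmin}(e_{i-1})+1$, $\mathrm{rmax}(x)=\mathrm{rmax}(e_i)$, increase $\mathrm{rmin}(e_j),\mathrm{rmax}(e_j)$ by one for all $j\ge i$, and store $x$. Delete$(e_i)$: remove $e_i$, leaving all other values unchanged. Define $g_i=\mathrm{rmin}(e_i)-\mathrm{rmin}(e_{i-1})$ and $\Delta_i=\mathrm{rmax}(e_i)-\mathrm{rmin}(e_i)$. Band values: each element $x$ has an integer $\mathbf{v}(x)$: at time step $t_0(x)$, $\mathbf{v}(x)=0$; at each time step $t>t_0(x)$, if $t$ is a multiple of $2^{\mathbf{v}(x)}$ then $\mathbf{v}(x)$ is increased by one. The segment $\mathrm{seg}(e_i)$ of a stored element $e_i$ is the maximal set of consecutive stored elements $e_j,\dots,e_{i-1}$ all with band value strictly less than $\mathbf{v}(e_i)$; $g^*_i=g_i+\sum_{e_k\in\mathrm{seg}(e_i)}g_k$.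 Algorithm: at each time step $t$: (i) run Insert on each element of the chunk; (ii) (deletion step) while there is a stored $e_i$ ($i<s$) with $\mathbf{v}(e_i)\le\mathbf{v}(e_{i+1})$ and $g^*_i+g_{i+1}+\Delta_{i+1}\le t$, run Delete on $e_i$ and on every element of $\mathrm{seg}(e_i)$. After the deletion step at time $t$, a stored element $e_i$ ($i<s$) is type-1 if $\mathbf{v}(e_i)>\mathbf{v}(e_{i+1})$, and type-2 if it is not type-1 (in which case $g^*_i+g_{i+1}+\Delta_{i+1}>t$). *)

theory Defs
  imports Complex_Main
begin

text \<open>A stored entry: its key (None encodes the sentinel +infinity), rmin, rmax,
  and its arrival time step t0 (the sentinel has t0 = 0).\<close>
datatype 'a entry = Entry (key: "'a option") (rmin: nat) (rmax: nat) (birth: nat)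

fun bandv :: "nat \<Rightarrow> nat \<Rightarrow> nat" where
  "bandv t0 0 = 0"
| "bandv t0 (Suc t) =
     (if Suc t \<le> t0 then 0
      else (let v = bandv t0 t in if Suc t mod 2 ^ v = 0 then v + 1 else v))"

definition band :: "nat \<Rightarrow> 'a entry \<Rightarrow> nat" where
  "band t e = bandv (birth e) t"

definition above :: "'a::linorder \<Rightarrow> 'a entry \<Rightarrow> bool" where
  "above x e = (case key e of None \<Rightarrow> True | Some y \<Rightarrow> x < y)"

text \<open>Stored elements e_1 < ... < e_s are the list L with L!k = e_(k+1).\<close>
definition qs_insert :: "nat \<Rightarrow> 'a::linorder \<Rightarrow> 'a entry list \<Rightarrow> 'a entry list" where
  "qs_insert t x L =
     (let i = length (takeWhile (\<lambda>e. \<not> above x e) L);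
          pr = (if i = 0 then 0 else rmin (L ! (i - 1)));
          new = Entry (Some x) (pr + 1) (rmax (L ! i)) t
      in take i L @ [new] @
         map (\<lambda>e. Entry (key e) (rmin e + 1) (rmax e + 1) (birth e)) (drop i L))"

definition gg :: "'a entry list \<Rightarrow> nat \<Rightarrow> int" where
  "gg L k = int (rmin (L ! k)) - (if k = 0 then 0 else int (rmin (L ! (k - 1))))"

definition Dl :: "'a entry list \<Rightarrow> nat \<Rightarrow> int" where
  "Dl L k = int (rmax (L ! k)) - int (rmin (L ! k))"

text \<open>seg(e_k) = indices seg_start..k-1 (maximal run of predecessors with smaller band).\<close>
definition seg_start :: "nat \<Rightarrow> 'a entry list \<Rightarrow> nat \<Rightarrow> nat" where
  "seg_start t L k = (LEAST j. j \<le> k \<and> (\<forall>m. j \<le> m \<and> m < k \<longrightarrow> band t (L ! m) < band t (L ! k)))"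

definition gstar :: "nat \<Rightarrow> 'a entry list \<Rightarrow> nat \<Rightarrow> int" where
  "gstar t L k = gg L k + (\<Sum>m\<in>{seg_start t L k..<k}. gg L m)"

definition del_step :: "nat \<Rightarrow> 'a entry list \<Rightarrow> 'a entry list \<Rightarrow> bool" where
  "del_step t L L' = (\<exists>k. k + 1 < length L \<and> band t (L ! k) \<le> band t (L ! (k + 1)) \<and>
       gstar t L k + gg L (k + 1) + Dl L (k + 1) \<le> int t \<and>
       L' = take (seg_start t L k) L @ drop (k + 1) L)"

definition chunk :: "(nat \<Rightarrow> 'a) \<Rightarrow> nat \<Rightarrow> nat \<Rightarrow> 'a list" where
  "chunk xs l t = map xs [(t - 1) * l..<t * l]"

text \<open>reached xs l t L: L is a possible content of QS after the deletion step of time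
  step t (any order of the nondeterministic deletions); t = 0 is the initial state.\<close>
inductive reached :: "(nat \<Rightarrow> 'a::linorder) \<Rightarrow> nat \<Rightarrow> nat \<Rightarrow> 'a entry list \<Rightarrow> bool"
  for xs l where
  init: "reached xs l 0 [Entry None 1 1 0]"
| step: "reached xs l t L \<Longrightarrow>
         L1 = fold (qs_insert (Suc t)) (chunk xs l (Suc t)) L \<Longrightarrow>
         (del_step (Suc t))\<^sup>*\<^sup>* L1 L2 \<Longrightarrow>
         \<not> (\<exists>L3. del_step (Suc t) L2 L3) \<Longrightarrow>
         reached xs l (Suc t) L2"

definition type1 :: "nat \<Rightarrow> 'a entry list \<Rightarrow> nat \<Rightarrow> bool" where
  "type1 t L k = (band t (L ! k) > band t (L ! (k + 1)))"

definition num_type2 :: "nat \<Rightarrow> 'a entry list \<Rightarrow> nat" where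
  "num_type2 t L = card {k. k + 1 < length L \<and> \<not> type1 t L k}"

end

theory Submission
  imports Defs
begin

text \<open>Every stored entry has a nonnegative gap \<open>g\<close> and an uncertainty \<open>\<Delta>\<close> at most its
  arrival time. A deletion only moves gaps into an entry of at least the same band value, and an
  element of band value at most \<open>w\<close> arrived within the last \<open>2 ^ (w + 1)\<close> time steps, so the gaps
  of the entries of band value at most \<open>w\<close> add up to at most \<open>l 2 ^ (w + 1)\<close>. A type-2 element
  \<open>e\<^sub>k\<close> with \<open>v(e\<^sub>k\<^sub>+\<^sub>1) = w\<close> survived the deletion step, so
  \<open>g\<^sup>*\<^sub>k + g\<^sub>k\<^sub>+\<^sub>1 > t - \<Delta>\<^sub>k\<^sub>+\<^sub>1 \<ge> 2 ^ (w - 1)\<close>; these gaps belong to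
  \<open>seg(e\<^sub>k)\<close>, \<open>e\<^sub>k\<close> and \<open>e\<^sub>k\<^sub>+\<^sub>1\<close>, which are disjoint for type-2 elements with the same \<open>w\<close>
  whose indices differ by at least two. Hence there are at most \<open>8 l\<close> type-2 elements for each of
  the \<open>O(log t)\<close> band values.\<close>

lemma sum_insert_at:
  fixes h :: "nat \<Rightarrow> 'b::comm_monoid_add"
  assumes "i \<le> n"
  shows "(\<Sum>k<Suc n. if k < i then h k else if k = i then a else h (k - 1)) = a + (\<Sum>k<n. h k)"
  using assms by (induction n rule: dec_induct) (simp_all add: ac_simps)

lemma sum_split_block:
  fixes h :: "nat \<Rightarrow> 'b::comm_monoid_add"
  assumes "j \<le> k" and "Suc k < n"
  shows "(\<Sum>q<n. h q) = (\<Sum>q<j. h q) + (\<Sum>q\<in>{j..Suc k}. h q) + (\<Sum>q\<in>{Suc (Suc k)..<n}. h q)"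
proof -
  have front: "sum h {0..<j} + sum h {j..<Suc (Suc k)} = sum h {0..<Suc (Suc k)}"
    by (rule sum.atLeastLessThan_concat) (use assms in auto)
  have whole: "sum h {0..<Suc (Suc k)} + sum h {Suc (Suc k)..<n} = sum h {0..<n}"
    by (rule sum.atLeastLessThan_concat) (use assms in auto)
  show ?thesis
    unfolding lessThan_atLeast0 atLeastLessThanSuc_atLeastAtMost[symmetric] front whole ..
qed

lemma sum_collapse_block:
  fixes h :: "nat \<Rightarrow> 'b::comm_monoid_add"
  assumes "j \<le> k" and "Suc k < n"
  shows "(\<Sum>m<n - (Suc k - j). if m < j then h m else if m = j then a else h (m + (Suc k - j)))
       = (\<Sum>q<j. h q) + a + (\<Sum>q\<in>{Suc (Suc k)..<n}. h q)"
proof -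
  define d where "d = Suc k - j"
  define g where "g m = (if m < j then h m else if m = j then a else h (m + d))" for m
  have "sum g {0..<Suc j} + sum g {Suc j..<n - d} = sum g {0..<n - d}"
    by (rule sum.atLeastLessThan_concat) (use assms in \<open>auto simp: d_def\<close>)
  then have "(\<Sum>m<n - d. g m) = (\<Sum>m<j. g m) + g j + (\<Sum>m\<in>{Suc j..<n - d}. g m)"
    by (metis lessThan_atLeast0 sum.lessThan_Suc)
  also have "(\<Sum>m\<in>{Suc j..<n - d}. g m) = (\<Sum>m\<in>{Suc j..<n - d}. h (m + d))"
    by (rule sum.cong) (auto simp: g_def)
  also have "\<dots> = (\<Sum>q\<in>{Suc j + d..<n - d + d}. h q)"
    by (rule sum.shift_bounds_nat_ivl[symmetric])
  also have "{Suc j + d..<n - d + d} = {Suc (Suc k)..<n}"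
    using assms by (simp add: d_def)
  finally show ?thesis unfolding d_def[symmetric] by (simp add: g_def)
qed

lemma sum_disjoint_family_le:
  fixes f :: "'b \<Rightarrow> 'c::ordered_comm_monoid_add"
  assumes "finite A" and "finite C" and "\<And>k. k \<in> A \<Longrightarrow> J k \<subseteq> C"
    and "\<And>k k'. k \<in> A \<Longrightarrow> k' \<in> A \<Longrightarrow> k \<noteq> k' \<Longrightarrow> J k \<inter> J k' = {}"
    and "\<And>q. q \<in> C \<Longrightarrow> 0 \<le> f q"
  shows "(\<Sum>k\<in>A. \<Sum>q\<in>J k. f q) \<le> (\<Sum>q\<in>C. f q)"
proof -
  have "\<And>k. k \<in> A \<Longrightarrow> finite (J k)" using assms(2,3) finite_subset by blast
  then have "(\<Sum>k\<in>A. \<Sum>q\<in>J k. f q) = (\<Sum>q\<in>(\<Union>k\<in>A. J k). f q)"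
    using assms(1,4) by (intro sum.UNION_disjoint[symmetric]) auto
  also have "\<dots> \<le> (\<Sum>q\<in>C. f q)"
    using assms(2,3,5) by (intro sum_mono2) auto
  finally show ?thesis .
qed

lemma mono_less_threshold:
  fixes f :: "nat \<Rightarrow> nat"
  assumes "mono f" and "\<And>v. v \<le> f v"
  obtains w' where "\<And>v. f v < w \<longleftrightarrow> v < w'"
proof -
  let ?w' = "LEAST v. w \<le> f v"
  have reach: "w \<le> f ?w'" by (rule LeastI[of _ w]) (use assms(2) in simp)
  have "f v < w \<longleftrightarrow> v < ?w'" for v
  proof
    assume "f v < w"
    then show "v < ?w'" using reach monoD[OF assms(1), of ?w' v] by (meson le_trans not_le)
  next
    assume "v < ?w'"
    then show "f v < w" using not_less_Least by (metis not_le)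
  qed
  then show ?thesis using that by blast
qed

section \<open>Band values\<close>

definition band_step :: "nat \<Rightarrow> nat \<Rightarrow> nat" where
  "band_step T v = (if T mod 2 ^ v = 0 then Suc v else v)"

lemma bandv_Suc_step: "b \<le> t \<Longrightarrow> bandv b (Suc t) = band_step (Suc t) (bandv b t)"
  by (simp add: band_step_def Let_def)

lemma bandv_eq_0: "t \<le> b \<Longrightarrow> bandv b t = 0"
  by (induction t) auto

lemma band_step_mono: "mono (band_step T)"
proof (rule monoI)
  fix v v' :: nat
  assume "v \<le> v'"
  then show "band_step T v \<le> band_step T v'" by (cases "v = v'") (auto simp: band_step_def)
qed

lemma band_step_ge: "v \<le> band_step T v"
  by (simp add: band_step_def)

lemma bandv_antimono: "b \<le> b' \<Longrightarrow> bandv b' t \<le> bandv b t"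
proof (induction t)
  case (Suc t)
  show ?case
  proof (cases "Suc t \<le> b'")
    case False
    then show ?thesis
      using Suc bandv_Suc_step[of b t] bandv_Suc_step[of b' t] monoD[OF band_step_mono] by simp
  qed (simp add: bandv_eq_0)
qed simp

text \<open>The witness r is the time step at which the band value was last raised.\<close>
lemma bandv_raised_at_multiple:
  "b \<le> t \<Longrightarrow> 0 < bandv b t \<Longrightarrow>
     \<exists>r\<le>t. 2 ^ (bandv b t - 1) dvd r \<and> b + 2 ^ (bandv b t - 1) \<le> r"
proof (induction t)
  case (Suc t)
  show ?case
  proof (cases "Suc t \<le> b")
    case True
    then show ?thesis using Suc.prems by (simp add: bandv_eq_0)
  next
    case False
    then have bt: "b \<le> t" by simp
    define v where "v = bandv b t"
    show ?thesis
    proof (cases "Suc t mod 2 ^ v = 0")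
      case True
      then have raised: "bandv b (Suc t) = Suc v"
        using bandv_Suc_step[OF bt] by (simp add: band_step_def v_def)
      have "b + 2 ^ v \<le> Suc t"
      proof (cases "v = 0")
        case False
        then obtain r where r: "r \<le> t" "2 ^ (v - 1) dvd r" "b + 2 ^ (v - 1) \<le> r"
          using Suc.IH bt v_def by auto
        have "2 ^ (v - 1) dvd (2::nat) ^ v" by (simp add: le_imp_power_dvd)
        then have "2 ^ (v - 1) dvd Suc t - r"
          using True r(2) dvd_trans dvd_diff_nat mod_0_imp_dvd by blast
        then have "2 ^ (v - 1) \<le> Suc t - r" using r(1) by (intro dvd_imp_le) auto
        moreover have "(2::nat) ^ v = 2 ^ (v - 1) + 2 ^ (v - 1)"
          using False by (metis mult_2 power_Suc Suc_pred' neq0_conv)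
        ultimately show ?thesis using r by simp
      qed (use bt in simp)
      then show ?thesis using raised True by auto
    next
      case False
      then have "bandv b (Suc t) = v"
        using bandv_Suc_step[OF bt] by (simp add: band_step_def v_def)
      then show ?thesis using Suc bt v_def by (metis le_SucI)
    qed
  qed
qed simp

lemma bandv_lower: "b \<le> t \<Longrightarrow> 0 < bandv b t \<Longrightarrow> b + 2 ^ (bandv b t - 1) \<le> t"
  using bandv_raised_at_multiple by fastforce

text \<open>The next time step at which the band value is raised, \<open>t + 2 ^ v - t mod 2 ^ v\<close>,
  comes before \<open>b + 2 ^ (v + 1)\<close>.\<close>
lemma bandv_next_raise:
  "b \<le> t \<Longrightarrow> t + 2 ^ bandv b t - t mod 2 ^ bandv b t < b + 2 ^ Suc (bandv b t)"
proof (induction t)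
  case (Suc t)
  show ?case
  proof (cases "Suc t \<le> b")
    case True
    then have "b = Suc t" using Suc.prems by simp
    then show ?thesis by (simp add: bandv_eq_0)
  next
    case False
    then have bt: "b \<le> t" by simp
    define v where "v = bandv b t"
    have IH: "t + 2 ^ v - t mod 2 ^ v < b + 2 ^ Suc v" using Suc.IH bt v_def by simp
    have "t mod 2 ^ v < 2 ^ v" by simp
    show ?thesis
    proof (cases "Suc t mod 2 ^ v = 0")
      case True
      then have "bandv b (Suc t) = Suc v"
        using bandv_Suc_step[OF bt] by (simp add: band_step_def v_def)
      moreover have "Suc (t mod 2 ^ v) = 2 ^ v" using True by (metis mod_Suc nat.distinct(1))
      ultimately show ?thesis using IH by simp
    next
      case False
      then have "bandv b (Suc t) = v"
        using bandv_Suc_step[OF bt] by (simp add: band_step_def v_def)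
      moreover have "Suc t mod 2 ^ v = Suc (t mod 2 ^ v)" using False by (metis mod_Suc)
      ultimately show ?thesis using IH \<open>t mod 2 ^ v < 2 ^ v\<close> by simp
    qed
  qed
qed simp

lemma bandv_upper:
  assumes "b \<le> t"
  shows "t + 2 \<le> b + 2 ^ Suc (bandv b t)"
proof -
  have "t mod 2 ^ bandv b t < 2 ^ bandv b t" by simp
  then show ?thesis using bandv_next_raise[OF assms] by linarith
qed

lemma card_arrivals_band_le: "card {b. b < t \<and> bandv b t \<le> w} < 2 ^ Suc w"
proof -
  have "{b. b < t \<and> bandv b t \<le> w} \<subseteq> {t + 2 - 2 ^ Suc w..<t}"
  proof
    fix b assume b: "b \<in> {b. b < t \<and> bandv b t \<le> w}"
    then have "t + 2 \<le> b + 2 ^ Suc (bandv b t)" using bandv_upper by simp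
    also have "\<dots> \<le> b + 2 ^ Suc w" using b by simp
    finally show "b \<in> {t + 2 - 2 ^ Suc w..<t}" using b by simp
  qed
  then have "card {b. b < t \<and> bandv b t \<le> w} \<le> t - (t + 2 - 2 ^ Suc w)"
    using card_mono[of "{t + 2 - 2 ^ Suc w..<t}"] by fastforce
  moreover have "(2::nat) \<le> 2 ^ Suc w" by simp
  ultimately show ?thesis by linarith
qed

lemma bandv_0_le_log:
  assumes "2 \<le> t"
  shows "real (Suc (bandv 0 t)) \<le> 3 * log 2 (real t)"
proof -
  define V where "V = bandv 0 t"
  have log_ge_1: "1 \<le> log 2 (real t)"
    using log_mono[of 2 2 "real t"] assms by simp
  have "real V \<le> log 2 (real t) + 1"
  proof (cases "V = 0")
    case False
    then have "real (2 ^ (V - 1)) \<le> real t" using bandv_lower[of 0 t] V_def by simp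
    then have "log 2 (2 ^ (V - 1)) \<le> log 2 (real t)" by (intro log_mono) auto
    then show ?thesis using False by simp
  qed (use log_ge_1 in simp)
  then show ?thesis using log_ge_1 V_def by simp
qed

section \<open>Deletion blocks and insertion positions\<close>

text \<open>The indices of \<open>seg(e\<^sub>k)\<close>, \<open>e\<^sub>k\<close> and \<open>e\<^sub>k\<^sub>+\<^sub>1\<close>: deleting \<open>e\<^sub>k\<close> with its segment
  merges their gaps into the gap of \<open>e\<^sub>k\<^sub>+\<^sub>1\<close>.\<close>
definition deletion_block :: "nat \<Rightarrow> 'a entry list \<Rightarrow> nat \<Rightarrow> nat set" where
  "deletion_block t L k = {seg_start t L k..Suc k}"

lemma seg_start_le: "seg_start t L k \<le> k"
  and band_less_in_seg: "seg_start t L k \<le> m \<Longrightarrow> m < k \<Longrightarrow> band t (L ! m) < band t (L ! k)"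
proof -
  let ?P = "\<lambda>j. j \<le> k \<and> (\<forall>m. j \<le> m \<and> m < k \<longrightarrow> band t (L ! m) < band t (L ! k))"
  have "?P (seg_start t L k)" unfolding seg_start_def by (rule LeastI[of ?P k]) simp
  then show "seg_start t L k \<le> k"
    and "seg_start t L k \<le> m \<Longrightarrow> m < k \<Longrightarrow> band t (L ! m) < band t (L ! k)" by auto
qed

lemma sum_gg_deletion_block: "(\<Sum>q\<in>deletion_block t L k. gg L q) = gstar t L k + gg L (Suc k)"
proof -
  have "deletion_block t L k = insert (Suc k) (insert k {seg_start t L k..<k})"
    using seg_start_le[of t L k] by (auto simp: deletion_block_def)
  then show ?thesis by (simp add: gstar_def)
qed

lemma band_le_in_deletion_block:
  assumes "q \<in> deletion_block t L k" and "band t (L ! k) \<le> band t (L ! Suc k)"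
  shows "band t (L ! q) \<le> band t (L ! Suc k)"
proof (cases "q < k")
  case True
  then show ?thesis using assms band_less_in_seg[of t L k q] by (simp add: deletion_block_def)
next
  case False
  then have "q = k \<or> q = Suc k" using assms(1) by (auto simp: deletion_block_def)
  then show ?thesis using assms(2) by auto
qed

lemma del_step_iff:
  "del_step t L L' \<longleftrightarrow> (\<exists>k. Suc k < length L \<and> band t (L ! k) \<le> band t (L ! Suc k) \<and>
     (\<Sum>q\<in>deletion_block t L k. gg L q) + Dl L (Suc k) \<le> int t \<and>
     L' = take (seg_start t L k) L @ drop (Suc k) L)"
  unfolding del_step_def sum_gg_deletion_block by simp

lemma gg_telescope:
  "j \<le> n \<Longrightarrow>
     (\<Sum>q\<in>{j..n}. gg L q) = int (rmin (L ! n)) - (if j = 0 then 0 else int (rmin (L ! (j - 1))))"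
proof (induction n rule: dec_induct)
  case (step n)
  have "{j..Suc n} = insert (Suc n) {j..n}" using step by auto
  then show ?case using step by (simp add: gg_def)
qed (simp add: gg_def)

definition shift_entry :: "'a entry \<Rightarrow> 'a entry" where
  "shift_entry e = Entry (key e) (rmin e + 1) (rmax e + 1) (birth e)"

lemma qs_insert_split:
  assumes "L \<noteq> []" and "key (last L) = None"
  obtains i where "i < length L"
    and "qs_insert T x L = take i L @
           [Entry (Some x) ((if i = 0 then 0 else rmin (L ! (i - 1))) + 1) (rmax (L ! i)) T] @
           map shift_entry (drop i L)"
proof -
  let ?i = "length (takeWhile (\<lambda>e. \<not> above x e) L)"
  have "above x (last L)" using assms(2) by (simp add: above_def)
  then have "takeWhile (\<lambda>e. \<not> above x e) L \<noteq> L"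
    using assms(1) last_in_set takeWhile_eq_all_conv by metis
  then have "?i < length L"
    using length_takeWhile_le takeWhile_eq_take[of _ L] by (metis le_neq_implies_less take_all)
  then show ?thesis using that unfolding qs_insert_def shift_entry_def Let_def by simp
qed

section \<open>The invariant\<close>

text \<open>The bound \<open>g + \<Delta> \<le> T + 1\<close> (rather than \<open>T\<close>) lets the sentinel, with \<open>g = 1\<close>,
  satisfy it at \<open>T = 0\<close>.\<close>
definition entry_ok :: "nat \<Rightarrow> 'a entry list \<Rightarrow> nat \<Rightarrow> bool" where
  "entry_ok T L k \<longleftrightarrow> 0 \<le> gg L k \<and> gg L k + Dl L k \<le> int (Suc T) \<and>
     Dl L k \<le> int (birth (L ! k)) \<and> birth (L ! k) \<le> T"

definition gsum_below :: "nat \<Rightarrow> 'a entry list \<Rightarrow> nat \<Rightarrow> int" where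
  "gsum_below T L w = (\<Sum>k<length L. if band T (L ! k) < w then gg L k else 0)"

lemma gsum_below_0 [simp]: "gsum_below T L 0 = 0"
  by (simp add: gsum_below_def)

text \<open>The state during time step \<open>T\<close>, after \<open>c\<close> elements of the current chunk have been
  inserted. A deletion merges gaps into an entry of at least the same band value, so the gaps of the
  entries with band value below \<open>w\<close> add up to at most the number of arrivals with band value
  below \<open>w\<close>: \<open>l\<close> per earlier time step, and \<open>c\<close> in the current one. The sentinel is counted
  as one of \<open>l\<close> arrivals at time \<open>0\<close>.\<close>
definition qs_inv :: "nat \<Rightarrow> nat \<Rightarrow> nat \<Rightarrow> 'a entry list \<Rightarrow> bool" where
  "qs_inv l T c L \<longleftrightarrow> L \<noteq> [] \<and> key (last L) = None \<and> (\<forall>k<length L. entry_ok T L k) \<and>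
     (\<forall>w. gsum_below T L w \<le> int l * int (card {b. b < T \<and> bandv b T < w}) + int c)"

context
  fixes L L' :: "'a entry list" and i :: nat and new :: "'a entry"
  assumes i_less: "i < length L"
    and inserted: "L' = take i L @ [new] @ map shift_entry (drop i L)"
    and rmin_new: "rmin new = (if i = 0 then 0 else rmin (L ! (i - 1))) + 1"
    and rmax_new: "rmax new = rmax (L ! i)"
begin

lemma length_inserted: "length L' = Suc (length L)"
  using i_less inserted by simp

lemma nth_inserted:
  "k < length L' \<Longrightarrow>
     L' ! k = (if k < i then L ! k else if k = i then new else shift_entry (L ! (k - 1)))"
  using i_less inserted by (auto simp: nth_append nth_Cons' min_def)

lemma gg_inserted:
  assumes "k < length L'"
  shows "gg L' k = (if k < i then gg L k else if k = i then 1 else gg L (k - 1))"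
proof -
  have prev: "L' ! (k - 1) = (if k - 1 < i then L ! (k - 1) else if k - 1 = i then new
                              else shift_entry (L ! (k - 1 - 1)))"
    using assms nth_inserted[of "k - 1"] by simp
  consider "k < i" | "k = i" | "k = Suc i" | "Suc i < k" by linarith
  then show ?thesis
    using nth_inserted[OF assms] prev rmin_new by cases (auto simp: gg_def shift_entry_def)
qed

lemma Dl_inserted:
  "k < length L' \<Longrightarrow>
     Dl L' k = (if k < i then Dl L k else if k = i then gg L i + Dl L i - 1 else Dl L (k - 1))"
  using nth_inserted[of k] rmin_new rmax_new by (simp add: Dl_def gg_def shift_entry_def)

lemma last_key_inserted: "key (last L') = key (last L)"
proof -
  have ne: "L \<noteq> []" "L' \<noteq> []" using i_less length_inserted by auto
  then have "last L' = L' ! length L" by (simp add: last_conv_nth length_inserted)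
  then show ?thesis using ne(1) nth_inserted[of "length L"] length_inserted i_less
    by (simp add: last_conv_nth shift_entry_def)
qed

lemma entry_ok_inserted:
  assumes ok: "\<forall>k<length L. entry_ok T L k" and "birth new = T" and k: "k < length L'"
  shows "entry_ok T L' k"
proof -
  consider "k < i" | "k = i" | "i < k" by linarith
  then show ?thesis
    using ok[rule_format, of k] ok[rule_format, of i] ok[rule_format, of "k - 1"] assms i_less
      length_inserted gg_inserted[OF k] Dl_inserted[OF k] nth_inserted[OF k]
    by cases (auto simp: entry_ok_def shift_entry_def)
qed

lemma gsum_below_inserted:
  assumes "birth new = T"
  shows "gsum_below T L' w = (if 0 < w then 1 else 0) + gsum_below T L w"
proof -
  define h where "h k = (if band T (L ! k) < w then gg L k else 0)" for k
  have "gsum_below T L' w =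
      (\<Sum>k<Suc (length L).
         if k < i then h k else if k = i then (if 0 < w then 1 else 0) else h (k - 1))"
    unfolding gsum_below_def length_inserted
    by (rule sum.cong)
      (use assms in \<open>auto simp: h_def gg_inserted nth_inserted length_inserted band_def
        bandv_eq_0 shift_entry_def\<close>)
  also have "\<dots> = (if 0 < w then 1 else 0) + (\<Sum>k<length L. h k)"
    by (rule sum_insert_at) (use i_less in simp)
  finally show ?thesis by (simp add: gsum_below_def h_def)
qed

end

context
  fixes L L' :: "'a entry list" and j k :: nat
  assumes j_le: "j \<le> k" and k_less: "Suc k < length L"
    and deleted: "L' = take j L @ drop (Suc k) L"
begin

lemma length_deleted: "length L' = length L - (Suc k - j)"
  using j_le k_less deleted by simp

lemma nth_deleted: "m < length L' \<Longrightarrow> L' ! m = (if m < j then L ! m else L ! (m + (Suc k - j)))"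
  using j_le k_less deleted by (auto simp: nth_append min_def intro!: arg_cong[where f="(!) L"])

lemma gg_deleted:
  assumes m: "m < length L'"
  shows "gg L' m = (if m < j then gg L m
                    else if m = j then (\<Sum>q\<in>{j..Suc k}. gg L q) else gg L (m + (Suc k - j)))"
proof -
  consider "m < j" | "m = j" | "j < m" by linarith
  then show ?thesis
  proof cases
    case 1
    then show ?thesis using nth_deleted m by (simp add: gg_def)
  next
    case 2
    then show ?thesis
      using nth_deleted[OF m] nth_deleted[of "m - 1"] m j_le gg_telescope[of j "Suc k" L]
      by (simp add: gg_def)
  next
    case 3
    then have "m - 1 + (Suc k - j) = m + (Suc k - j) - 1" using j_le by simp
    then show ?thesis using 3 nth_deleted[of m] nth_deleted[of "m - 1"] m j_le by (simp add: gg_def)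
  qed
qed

lemma Dl_deleted: "m < length L' \<Longrightarrow> Dl L' m = (if m < j then Dl L m else Dl L (m + (Suc k - j)))"
  using nth_deleted by (simp add: Dl_def)

lemma last_deleted: "last L' = last L"
  using deleted k_less by simp

lemma entry_ok_deleted:
  assumes ok: "\<forall>q<length L. entry_ok T L q"
    and merge: "(\<Sum>q\<in>{j..Suc k}. gg L q) + Dl L (Suc k) \<le> int T"
    and m: "m < length L'"
  shows "entry_ok T L' m"
proof -
  have "0 \<le> (\<Sum>q\<in>{j..Suc k}. gg L q)"
    using ok k_less by (intro sum_nonneg) (auto simp: entry_ok_def)
  moreover have "m + (Suc k - j) < length L" using m length_deleted j_le by simp
  moreover consider "m < j" | "m = j" | "j < m" by linarith
  ultimately show ?thesis
    using ok[rule_format, of m] ok[rule_format, of "Suc k"] ok[rule_format, of "m + (Suc k - j)"]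
      k_less j_le merge gg_deleted[OF m] Dl_deleted[OF m] nth_deleted[OF m]
    by cases (auto simp: entry_ok_def)
qed

lemma gsum_below_deleted_le:
  assumes gg_nonneg: "\<forall>q<length L. 0 \<le> gg L q"
    and band_le: "\<forall>q\<in>{j..Suc k}. band T (L ! q) \<le> band T (L ! Suc k)"
  shows "gsum_below T L' w \<le> gsum_below T L w"
proof -
  define h where "h q = (if band T (L ! q) < w then gg L q else 0)" for q
  define a where "a = (if band T (L ! Suc k) < w then (\<Sum>q\<in>{j..Suc k}. gg L q) else 0)"
  have "a \<le> (\<Sum>q\<in>{j..Suc k}. h q)"
  proof (cases "band T (L ! Suc k) < w")
    case True
    then have "(\<Sum>q\<in>{j..Suc k}. h q) = (\<Sum>q\<in>{j..Suc k}. gg L q)"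
      using band_le by (intro sum.cong) (auto simp: h_def intro: le_less_trans)
    then show ?thesis using True by (simp add: a_def)
  next
    case False
    have "0 \<le> (\<Sum>q\<in>{j..Suc k}. h q)"
      using gg_nonneg k_less by (intro sum_nonneg) (auto simp: h_def)
    then show ?thesis using False by (simp add: a_def)
  qed
  have "gsum_below T L' w =
      (\<Sum>m<length L - (Suc k - j). if m < j then h m else if m = j then a else h (m + (Suc k - j)))"
    unfolding gsum_below_def length_deleted
    by (rule sum.cong) (use length_deleted in \<open>auto simp: h_def a_def gg_deleted nth_deleted\<close>)
  also have "\<dots> = (\<Sum>q<j. h q) + a + (\<Sum>q\<in>{Suc (Suc k)..<length L}. h q)"
    by (rule sum_collapse_block[OF j_le k_less])
  also have "\<dots> \<le> (\<Sum>q<j. h q) + (\<Sum>q\<in>{j..Suc k}. h q) + (\<Sum>q\<in>{Suc (Suc k)..<length L}. h q)"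
    using \<open>a \<le> _\<close> by simp
  also have "\<dots> = gsum_below T L w"
    unfolding gsum_below_def using sum_split_block[OF j_le k_less, of h] by (simp add: h_def)
  finally show ?thesis .
qed

end

lemma qs_inv_insert:
  assumes inv: "qs_inv l T c L"
  shows "qs_inv l T (Suc c) (qs_insert T x L)"
proof -
  have ne: "L \<noteq> []" and last_key: "key (last L) = None"
    and ok: "\<forall>k<length L. entry_ok T L k"
    and bound: "\<And>w. gsum_below T L w \<le> int l * int (card {b. b < T \<and> bandv b T < w}) + int c"
    using inv unfolding qs_inv_def by auto
  obtain i where i: "i < length L" and ins: "qs_insert T x L = take i L @
      [Entry (Some x) ((if i = 0 then 0 else rmin (L ! (i - 1))) + 1) (rmax (L ! i)) T] @
      map shift_entry (drop i L)"
    using qs_insert_split[OF ne last_key] .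
  note facts = i ins entry.sel(2,3)
  have "qs_insert T x L \<noteq> []" using length_inserted[OF facts] by auto
  moreover have "key (last (qs_insert T x L)) = None"
    using last_key_inserted[OF facts] last_key by simp
  moreover have "entry_ok T (qs_insert T x L) k" if "k < length (qs_insert T x L)" for k
    using entry_ok_inserted[OF facts ok _ that] by simp
  moreover have "gsum_below T (qs_insert T x L) w
      \<le> int l * int (card {b. b < T \<and> bandv b T < w}) + int (Suc c)" for w
    using gsum_below_inserted[OF facts, of T w] bound[of w] by simp
  ultimately show ?thesis unfolding qs_inv_def by blast
qed

lemma qs_inv_fold_insert:
  "qs_inv l T c L \<Longrightarrow> qs_inv l T (c + length xs) (fold (qs_insert T) xs L)"
proof (induction xs arbitrary: c L)
  case (Cons x xs)
  then show ?case using Cons.IH[OF qs_inv_insert[OF Cons.prems]] by simp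
qed simp

lemma qs_inv_del_step:
  assumes inv: "qs_inv l T c L" and del: "del_step T L L'"
  shows "qs_inv l T c L'"
proof -
  have ne: "L \<noteq> []" and last_key: "key (last L) = None"
    and ok: "\<forall>k<length L. entry_ok T L k"
    and bound: "\<And>w. gsum_below T L w \<le> int l * int (card {b. b < T \<and> bandv b T < w}) + int c"
    using inv unfolding qs_inv_def by auto
  obtain k where k: "Suc k < length L" and band_k: "band T (L ! k) \<le> band T (L ! Suc k)"
    and merge: "(\<Sum>q\<in>deletion_block T L k. gg L q) + Dl L (Suc k) \<le> int T"
    and L': "L' = take (seg_start T L k) L @ drop (Suc k) L"
    using del unfolding del_step_iff by blast
  note facts = seg_start_le k L'
  have "0 < length L'" using length_deleted[OF facts] k seg_start_le[of T L k] by arith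
  then have "L' \<noteq> []" by auto
  moreover have "key (last L') = None" using last_deleted[OF facts] last_key by simp
  moreover have "entry_ok T L' m" if "m < length L'" for m
    using entry_ok_deleted[OF facts ok _ that] merge by (simp add: deletion_block_def)
  moreover have "gsum_below T L' w \<le> gsum_below T L w" for w
  proof (rule gsum_below_deleted_le[OF facts])
    show "\<forall>q<length L. 0 \<le> gg L q" using ok by (simp add: entry_ok_def)
    show "\<forall>q\<in>{seg_start T L k..Suc k}. band T (L ! q) \<le> band T (L ! Suc k)"
      using band_le_in_deletion_block[of _ T L k] band_k by (simp add: deletion_block_def)
  qed
  ultimately show ?thesis using bound unfolding qs_inv_def by (meson order_trans)
qed

lemma qs_inv_deletions: "(del_step T)\<^sup>*\<^sup>* L L' \<Longrightarrow> qs_inv l T c L \<Longrightarrow> qs_inv l T c L'"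
  by (induction rule: rtranclp_induct) (auto intro: qs_inv_del_step)

lemma qs_inv_next_step:
  assumes inv: "qs_inv l T l L"
  shows "qs_inv l (Suc T) 0 L"
proof -
  have ok: "\<forall>k<length L. entry_ok T L k"
    and bound: "\<And>w. gsum_below T L w \<le> int l * int (card {b. b < T \<and> bandv b T < w}) + int l"
    using inv unfolding qs_inv_def by auto
  have "gsum_below (Suc T) L w \<le> int l * int (card {b. b < Suc T \<and> bandv b (Suc T) < w})" for w
  proof -
    obtain w' where w': "\<And>v. band_step (Suc T) v < w \<longleftrightarrow> v < w'"
      using mono_less_threshold[OF band_step_mono band_step_ge] by blast
    have band_Suc: "bandv b (Suc T) < w \<longleftrightarrow> bandv b T < w'" if "b \<le> T" for b
      using bandv_Suc_step[OF that] w' by simp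
    have "gsum_below (Suc T) L w = gsum_below T L w'"
      unfolding gsum_below_def band_def using ok
      by (intro sum.cong) (auto simp: entry_ok_def band_Suc simp del: bandv.simps)
    also have "\<dots> \<le> int l * int (card {b. b < Suc T \<and> bandv b T < w'})"
    proof (cases "w' = 0")
      case True
      then show ?thesis by simp
    next
      case False
      then have "{b. b < Suc T \<and> bandv b T < w'} = insert T {b. b < T \<and> bandv b T < w'}"
        using bandv_eq_0[of T T] by auto
      then show ?thesis using bound[of w'] by (simp add: algebra_simps)
    qed
    also have "{b. b < Suc T \<and> bandv b T < w'} = {b. b < Suc T \<and> bandv b (Suc T) < w}"
      using band_Suc by auto
    finally show ?thesis .
  qed
  moreover have "\<forall>k<length L. entry_ok (Suc T) L k" using ok by (fastforce simp: entry_ok_def)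
  ultimately show ?thesis using inv unfolding qs_inv_def by simp
qed

lemma qs_inv_init:
  assumes "1 \<le> l"
  shows "qs_inv l 0 l [Entry None 1 1 0]"
proof -
  have "gsum_below 0 [Entry (None :: 'a option) 1 1 0] w = (if 0 < w then 1 else 0)" for w
    by (simp add: gsum_below_def band_def gg_def)
  then show ?thesis using assms by (simp add: qs_inv_def entry_ok_def gg_def Dl_def)
qed

lemma qs_inv_reached: "reached xs l t L \<Longrightarrow> 1 \<le> l \<Longrightarrow> qs_inv l t l L"
proof (induction rule: reached.induct)
  case init
  then show ?case by (rule qs_inv_init)
next
  case (step t L L1 L2)
  then have "qs_inv l (Suc t) (0 + length (chunk xs l (Suc t))) L1"
    using qs_inv_next_step qs_inv_fold_insert by blast
  then show ?case using step qs_inv_deletions by (simp add: chunk_def)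
qed

lemma reached_no_del_step: "reached xs l t L \<Longrightarrow> 0 < t \<Longrightarrow> \<not> del_step t L L'"
  by (cases rule: reached.cases) auto

section \<open>Counting type-2 elements\<close>

definition type2_band :: "nat \<Rightarrow> 'a entry list \<Rightarrow> nat \<Rightarrow> nat set" where
  "type2_band t L w = {k. Suc k < length L \<and> \<not> type1 t L k \<and> band t (L ! Suc k) = w}"

lemma finite_type2_band: "finite (type2_band t L w)"
  by (rule finite_subset[of _ "{..<length L}"]) (auto simp: type2_band_def)

lemma deletion_block_subset_band_le:
  assumes "k \<in> type2_band t L w"
  shows "deletion_block t L k \<subseteq> {q. q < length L \<and> band t (L ! q) \<le> w}"
  using assms band_le_in_deletion_block[of _ t L k]
  by (auto simp: type2_band_def type1_def deletion_block_def)

lemma deletion_blocks_disjoint: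
  assumes k: "k \<in> type2_band t L w" and k': "k' \<in> type2_band t L w" and "k + 2 \<le> k'"
  shows "deletion_block t L k \<inter> deletion_block t L k' = {}"
proof -
  have "Suc k < seg_start t L k'"
  proof (rule ccontr)
    assume "\<not> Suc k < seg_start t L k'"
    then have "band t (L ! Suc k) < band t (L ! k')"
      using band_less_in_seg[of t L k' "Suc k"] \<open>k + 2 \<le> k'\<close> by simp
    then show False using k k' by (simp add: type2_band_def type1_def)
  qed
  then show ?thesis by (auto simp: deletion_block_def)
qed

context
  fixes l t :: nat and L :: "'a entry list"
  assumes inv: "qs_inv l t l L" and no_del_step: "\<And>L'. \<not> del_step t L L'"
begin

text \<open>Since \<open>e\<^sub>k\<close> survived the deletion step, \<open>g\<^sup>*\<^sub>k + g\<^sub>k\<^sub>+\<^sub>1 > t - \<Delta>\<^sub>k\<^sub>+\<^sub>1\<close>; and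
  \<open>\<Delta>\<^sub>k\<^sub>+\<^sub>1\<close> is at most the arrival time of \<open>e\<^sub>k\<^sub>+\<^sub>1\<close>, which lies \<open>2 ^ (w - 1)\<close> time steps
  before \<open>t\<close> once its band value is \<open>w\<close>.\<close>
lemma deletion_block_gsum_lower:
  assumes k: "Suc k < length L" and type2: "\<not> type1 t L k"
  shows "2 ^ band t (L ! Suc k) \<le> 2 * (\<Sum>q\<in>deletion_block t L k. gg L q)"
proof -
  define S where "S = (\<Sum>q\<in>deletion_block t L k. gg L q)"
  define b where "b = birth (L ! Suc k)"
  define w where "w = band t (L ! Suc k)"
  have "\<not> S + Dl L (Suc k) \<le> int t"
    using no_del_step[of "take (seg_start t L k) L @ drop (Suc k) L"] k type2
    unfolding del_step_iff type1_def S_def by auto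
  moreover have "Dl L (Suc k) \<le> int b" and b_le: "b \<le> t"
    using inv k by (auto simp: qs_inv_def entry_ok_def b_def)
  ultimately have S_gt: "int t - int b < S" by simp
  show ?thesis
  proof (cases "w = 0")
    case True
    then show ?thesis using S_gt b_le by (simp add: w_def S_def)
  next
    case False
    then have "b + 2 ^ (w - 1) \<le> t" using bandv_lower[OF b_le] by (simp add: w_def b_def band_def)
    then have "int b + 2 ^ (w - 1) \<le> int t"
      by (metis of_nat_add of_nat_le_iff of_nat_numeral of_nat_power)
    moreover have "(2::int) ^ w = 2 * 2 ^ (w - 1)"
      using False by (metis power_Suc Suc_pred' neq0_conv)
    ultimately show ?thesis using S_gt by (simp add: w_def S_def)
  qed
qed

lemma gsum_band_le: "(\<Sum>q | q < length L \<and> band t (L ! q) \<le> w. gg L q) \<le> int l * 2 ^ Suc w"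
proof -
  have "(\<Sum>q | q < length L \<and> band t (L ! q) \<le> w. gg L q) = gsum_below t L (Suc w)"
    unfolding gsum_below_def by (subst sum.inter_filter[symmetric]) (auto intro!: sum.cong)
  also have "\<dots> \<le> int l * int (card {b. b < t \<and> bandv b t < Suc w}) + int l"
    using inv unfolding qs_inv_def by blast
  also have "\<dots> = int l * int (card {b. b < t \<and> bandv b t \<le> w} + 1)"
    by (simp add: algebra_simps less_Suc_eq_le)
  also have "\<dots> \<le> int l * 2 ^ Suc w"
  proof -
    have "card {b. b < t \<and> bandv b t \<le> w} + 1 \<le> 2 ^ Suc w"
      using card_arrivals_band_le[of t w] by simp
    then have "int (card {b. b < t \<and> bandv b t \<le> w} + 1) \<le> int (2 ^ Suc w)"
      by (simp only: of_nat_le_iff)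
    then show ?thesis by (intro mult_left_mono) simp_all
  qed
  finally show ?thesis .
qed

lemma sum_spread_deletion_blocks_le:
  assumes P: "P \<subseteq> type2_band t L w" and spread: "\<And>k k'. k \<in> P \<Longrightarrow> k' \<in> P \<Longrightarrow> k < k' \<Longrightarrow> k + 2 \<le> k'"
  shows "(\<Sum>k\<in>P. \<Sum>q\<in>deletion_block t L k. gg L q) \<le> int l * 2 ^ Suc w"
proof -
  have "(\<Sum>k\<in>P. \<Sum>q\<in>deletion_block t L k. gg L q) \<le> (\<Sum>q | q < length L \<and> band t (L ! q) \<le> w. gg L q)"
  proof (rule sum_disjoint_family_le)
    show "finite P" using P finite_type2_band finite_subset by blast
    show "deletion_block t L k \<subseteq> {q. q < length L \<and> band t (L ! q) \<le> w}" if "k \<in> P" for k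
      using P that deletion_block_subset_band_le by blast
    show "deletion_block t L k \<inter> deletion_block t L k' = {}" if "k \<in> P" "k' \<in> P" "k \<noteq> k'" for k k'
      using that P spread[of k k'] spread[of k' k] deletion_blocks_disjoint[of k t L w k']
        deletion_blocks_disjoint[of k' t L w k]
      by (cases "k < k'") (auto simp: Int_commute)
    show "0 \<le> gg L q" if "q \<in> {q. q < length L \<and> band t (L ! q) \<le> w}" for q
      using inv that by (simp add: qs_inv_def entry_ok_def)
  qed simp
  also have "\<dots> \<le> int l * 2 ^ Suc w" by (rule gsum_band_le)
  finally show ?thesis .
qed

text \<open>Consecutive indices may share an entry of their deletion blocks, so the blocks of even and
  of odd indices are bounded separately.\<close>
lemma card_type2_band_le: "card (type2_band t L w) \<le> 8 * l"
proof -
  define K where "K = type2_band t L w"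
  define S where "S k = (\<Sum>q\<in>deletion_block t L k. gg L q)" for k
  have spread_even: "k + 2 \<le> k'" if "k \<in> K \<inter> {k. even k}" "k' \<in> K \<inter> {k. even k}" "k < k'" for k k'
    using that by auto presburger
  have spread_odd: "k + 2 \<le> k'" if "k \<in> K - {k. even k}" "k' \<in> K - {k. even k}" "k < k'" for k k'
    using that by auto presburger
  have even_part: "(\<Sum>k\<in>K \<inter> {k. even k}. S k) \<le> int l * 2 ^ Suc w"
    unfolding S_def by (rule sum_spread_deletion_blocks_le[OF _ spread_even]) (simp add: K_def)
  have odd_part: "(\<Sum>k\<in>K - {k. even k}. S k) \<le> int l * 2 ^ Suc w"
    unfolding S_def by (rule sum_spread_deletion_blocks_le[OF _ spread_odd]) (auto simp: K_def)
  have "int (card K) * 2 ^ w = (\<Sum>k\<in>K. 2 ^ w)" by simp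
  also have "\<dots> \<le> (\<Sum>k\<in>K. 2 * S k)"
    using deletion_block_gsum_lower by (intro sum_mono) (auto simp: K_def type2_band_def S_def)
  also have "\<dots> = (\<Sum>k\<in>K \<inter> {k. even k}. 2 * S k) + (\<Sum>k\<in>K - {k. even k}. 2 * S k)"
    by (rule sum.Int_Diff) (simp add: K_def finite_type2_band)
  also have "\<dots> = 2 * (\<Sum>k\<in>K \<inter> {k. even k}. S k) + 2 * (\<Sum>k\<in>K - {k. even k}. S k)"
    by (simp add: sum_distrib_left)
  also have "\<dots> \<le> 2 * (int l * 2 ^ Suc w) + 2 * (int l * 2 ^ Suc w)"
    using even_part odd_part by simp
  also have "\<dots> = int (8 * l) * 2 ^ w" by simp
  finally show ?thesis unfolding K_def by simp
qed

lemma num_type2_le: "num_type2 t L \<le> 8 * l * Suc (bandv 0 t)"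
proof -
  define V where "V = bandv 0 t"
  have "{k. k + 1 < length L \<and> \<not> type1 t L k} \<subseteq> (\<Union>w\<in>{..V}. type2_band t L w)"
    using bandv_antimono[of 0 _ t] by (auto simp: type2_band_def band_def V_def)
  then have "num_type2 t L \<le> card (\<Union>w\<in>{..V}. type2_band t L w)"
    unfolding num_type2_def by (intro card_mono) (auto simp: finite_type2_band)
  also have "\<dots> \<le> (\<Sum>w\<in>{..V}. card (type2_band t L w))" by (rule card_UN_le) simp
  also have "\<dots> \<le> (\<Sum>w\<in>{..V}. 8 * l)" by (intro sum_mono card_type2_band_le)
  finally show ?thesis by (simp add: V_def ac_simps)
qed

end

theorem mainTheorem7:
  "\<exists>C::real. \<forall>(xs :: nat \<Rightarrow> 'a::linorder) (l::nat) (t::nat) L.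
     l \<ge> 1 \<longrightarrow> inj xs \<longrightarrow> t \<ge> 2 \<longrightarrow> reached xs l t L \<longrightarrow>
     real (num_type2 t L) \<le> C * real l * log 2 (real t)"
proof (intro exI allI impI)
  fix xs :: "nat \<Rightarrow> 'a" and l t :: nat and L
  assume l: "1 \<le> l" and t: "2 \<le> t" and reached: "reached xs l t L"
  have "\<not> del_step t L L'" for L' using reached_no_del_step[OF reached] t by simp
  then have "num_type2 t L \<le> 8 * l * Suc (bandv 0 t)"
    using num_type2_le qs_inv_reached[OF reached l] by blast
  then have "real (num_type2 t L) \<le> 8 * real l * real (Suc (bandv 0 t))"
    by (metis of_nat_le_iff of_nat_mult of_nat_numeral)
  also have "\<dots> \<le> 8 * real l * (3 * log 2 (real t))"
    by (intro mult_left_mono bandv_0_le_log t) auto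
  finally show "real (num_type2 t L) \<le> 24 * real l * log 2 (real t)" by simp
qed

end
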